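(* Let $\eta>0$, $n\ge1$, $b\in\{1,\dots,n\}$. Let $X_n=(x_1,\dots,x_n)$ and $\hat X_n=(\hat x_1,\dots,\hat x_n)$ with $x_i=(a_i,y_i)$, $\hat x_i=(\hat a_i,\hat y_i)\in\mathcal{X}\subseteq\mathbb{R}^d\times\mathbb{R}$, such that $x_i=\hat x_i$ for all but at most one index $i$. Assume $\sup_{x\in\mathcal{X}}\Vert x\Vert\le D<\infty$. Let $(\Omega_k)_{k\ge1}$ be i.i.d. uniformly random subsets of $\{1,\dots,n\}$ of cardinality $b$, and let $P$ and $\hat P$ be the transition kernels of the chains $\theta_k=\left(I-\frac{\eta}{b}H_k\right)\theta_{k-1}+\frac{\eta}{b}q_k$ and $\hat\theta_k=\left(I-\frac{\eta}{b}\hat H_k\right)\hat\theta_{k-1}+\frac{\eta}{b}\hat q_k$, where $H_k=\sum_{i\in\Omega_k}a_ia_i^\top$, $q_k=\sum_{i\in\Omega_k}a_iy_i$, $\hat H_k=\sum_{i\in\Omega_k}\hat a_i\hat a_i^\top$, $\hat q_k=\sum_{i\in\Omega_k}\hat a_i\hat y_i$. Let $\hat V(\theta)=1+\Vert\theta\Vert$. Then $$\sup_{\theta\in\mathbb{R}^d}\frac{\mathcal{W}_1(\delta_\theta P,\delta_\theta\hat P)}{\hat V(\theta)}\le\frac{2\eta D^2}{n}.$$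
   Context: $\delta_\theta P$ denotes $P(\theta,\cdot)$, the law of one step of the chain started at $\theta$. $\mathcal{W}_1$ is the 1-Wasserstein distance $\inf\mathbb{E}\Vert X-Y\Vert$ over couplings. *)

theory Defs
  imports "HOL-Analysis.Analysis" "HOL-Probability.Probability"
begin

definition outer :: "real^'d \<Rightarrow> real^'d^'d" where
  "outer u = (\<chi> i j. u$i * u$j)"

definition batches :: "nat \<Rightarrow> nat \<Rightarrow> nat set set" where
  "batches n b = {\<Omega>. \<Omega> \<subseteq> {1..n} \<and> card \<Omega> = b}"

definition sgd_step :: "real \<Rightarrow> nat \<Rightarrow> (nat \<Rightarrow> real^'d) \<Rightarrow> (nat \<Rightarrow> real)
    \<Rightarrow> nat set \<Rightarrow> real^'d \<Rightarrow> real^'d" where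
  "sgd_step \<eta> b a y \<Omega> \<theta> =
     (mat 1 - (\<eta> / real b) *\<^sub>R (\<Sum>i\<in>\<Omega>. outer (a i))) *v \<theta>
     + (\<eta> / real b) *\<^sub>R (\<Sum>i\<in>\<Omega>. y i *\<^sub>R a i)"

definition sgd_kernel :: "real \<Rightarrow> nat \<Rightarrow> nat \<Rightarrow> (nat \<Rightarrow> real^'d) \<Rightarrow> (nat \<Rightarrow> real)
    \<Rightarrow> real^'d \<Rightarrow> (real^'d) pmf" where
  "sgd_kernel \<eta> n b a y \<theta> =
     map_pmf (\<lambda>\<Omega>. sgd_step \<eta> b a y \<Omega> \<theta>) (pmf_of_set (batches n b))"

definition W1 :: "('a::metric_space) pmf \<Rightarrow> 'a pmf \<Rightarrow> ennreal" where
  "W1 p q = (INF \<pi> \<in> {\<pi>. map_pmf fst \<pi> = p \<and> map_pmf snd \<pi> = q}.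
               \<integral>\<^sup>+ z. ennreal (dist (fst z) (snd z)) \<partial>(measure_pmf \<pi>))"

end

theory Submission
  imports Defs
begin

text \<open>Feed both chains the same minibatch \<open>\<Omega>\<close>. Their steps then differ only when \<open>\<Omega>\<close> contains
  the single index \<open>j\<close> at which the data sets differ, which happens with probability \<open>b / n\<close>;
  in that case the difference is \<open>\<eta>/b\<close> times the difference of the \<open>j\<close>-th sample terms
  \<open>y\<^sub>j a\<^sub>j - a\<^sub>j a\<^sub>j\<^sup>T \<theta>\<close>, each of norm at most \<open>D\<^sup>2 (1/2 + \<parallel>\<theta>\<parallel>)\<close>. This coupling bounds
  \<open>W1\<close> by \<open>(b/n) (\<eta>/b) 2 D\<^sup>2 (1 + \<parallel>\<theta>\<parallel>)\<close>.\<close>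

lemma outer_mult_vec: "outer u *v x = (u \<bullet> x) *\<^sub>R u"
  by (simp add: outer_def matrix_vector_mult_def inner_vec_def vec_eq_iff sum_distrib_left
      mult_ac)

lemma norm_outer_mult_vec_le: "norm (outer u *v x) \<le> norm u ^ 2 * norm x"
proof -
  have "norm (outer u *v x) = \<bar>u \<bullet> x\<bar> * norm u" by (simp add: outer_mult_vec)
  also have "\<dots> \<le> (norm u * norm x) * norm u"
    by (intro mult_right_mono Cauchy_Schwarz_ineq2) auto
  finally show ?thesis by (simp add: power2_eq_square mult_ac)
qed

lemma norm_Pair_leD:
  fixes u :: "'a::real_normed_vector" and v :: real
  assumes "norm (u, v) \<le> D"
  shows "norm u ^ 2 \<le> D\<^sup>2" and "norm (v *\<^sub>R u) \<le> D\<^sup>2 / 2"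
proof -
  have "sqrt (norm u ^ 2 + v\<^sup>2) \<le> D" using assms by (simp add: norm_Pair)
  then have "(sqrt (norm u ^ 2 + v\<^sup>2))\<^sup>2 \<le> D\<^sup>2" by (rule power_mono) simp
  then have sq: "norm u ^ 2 + v\<^sup>2 \<le> D\<^sup>2" by simp
  then show "norm u ^ 2 \<le> D\<^sup>2" using zero_le_power2[of v] by linarith
  have "2 * (\<bar>v\<bar> * norm u) \<le> v\<^sup>2 + norm u ^ 2"
    using sum_squares_bound[of "\<bar>v\<bar>" "norm u"] by (simp add: power2_eq_square)
  with sq show "norm (v *\<^sub>R u) \<le> D\<^sup>2 / 2" by simp
qed

lemma norm_sample_term_le:
  assumes "norm (u, v) \<le> D"
  shows "norm (v *\<^sub>R u - outer u *v \<theta>) \<le> D\<^sup>2 / 2 + D\<^sup>2 * norm \<theta>"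
proof -
  have "norm (outer u *v \<theta>) \<le> norm u ^ 2 * norm \<theta>" by (rule norm_outer_mult_vec_le)
  also have "\<dots> \<le> D\<^sup>2 * norm \<theta>"
    using norm_Pair_leD(1)[OF assms] by (rule mult_right_mono) simp
  finally have "norm (outer u *v \<theta>) \<le> D\<^sup>2 * norm \<theta>" .
  with norm_Pair_leD(2)[OF assms] norm_triangle_ineq4[of "v *\<^sub>R u" "outer u *v \<theta>"]
  show ?thesis by linarith
qed

lemma sgd_step_cong:
  assumes "\<And>i. i \<in> \<Omega> \<Longrightarrow> a i = a' i \<and> y i = y' i"
  shows "sgd_step \<eta> b a y \<Omega> \<theta> = sgd_step \<eta> b a' y' \<Omega> \<theta>"
  unfolding sgd_step_def using assms by (simp cong: sum.cong)

lemma sgd_step_insert: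
  assumes "finite \<Omega>" "j \<notin> \<Omega>"
  shows "sgd_step \<eta> b a y (insert j \<Omega>) \<theta>
    = sgd_step \<eta> b a y \<Omega> \<theta> + (\<eta> / real b) *\<^sub>R (y j *\<^sub>R a j - outer (a j) *v \<theta>)"
  unfolding sgd_step_def using assms
  by (simp add: matrix_vector_mult_diff_rdistrib matrix_vector_mult_add_rdistrib
      scaleR_matrix_vector_assoc[symmetric] algebra_simps)

lemma dist_sgd_step_le:
  assumes "finite \<Omega>" "j \<in> \<Omega>" "\<And>i. i \<in> \<Omega> - {j} \<Longrightarrow> a i = a' i \<and> y i = y' i"
    and "norm (a j, y j) \<le> D" "norm (a' j, y' j) \<le> D" "\<eta> \<ge> 0"
  shows "dist (sgd_step \<eta> b a y \<Omega> \<theta>) (sgd_step \<eta> b a' y' \<Omega> \<theta>)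
    \<le> \<eta> / real b * (2 * D\<^sup>2 * (1 + norm \<theta>))"
proof -
  define s where "s = y j *\<^sub>R a j - outer (a j) *v \<theta>"
  define s' where "s' = y' j *\<^sub>R a' j - outer (a' j) *v \<theta>"
  have split: "sgd_step \<eta> b c z \<Omega> \<theta>
      = sgd_step \<eta> b c z (\<Omega> - {j}) \<theta> + (\<eta> / real b) *\<^sub>R (z j *\<^sub>R c j - outer (c j) *v \<theta>)"
    for c z using sgd_step_insert[of "\<Omega> - {j}" j \<eta> b c z \<theta>] assms(1,2) by (simp add: insert_absorb)
  have "sgd_step \<eta> b a y (\<Omega> - {j}) \<theta> = sgd_step \<eta> b a' y' (\<Omega> - {j}) \<theta>"
    by (rule sgd_step_cong) (use assms(3) in auto)
  then have "sgd_step \<eta> b a y \<Omega> \<theta> - sgd_step \<eta> b a' y' \<Omega> \<theta> = (\<eta> / real b) *\<^sub>R (s - s')"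
    unfolding split[of a y] split[of a' y'] s_def s'_def by (simp add: algebra_simps)
  moreover have "norm (s - s') \<le> 2 * D\<^sup>2 * (1 + norm \<theta>)"
  proof -
    have "norm (s - s') \<le> norm s + norm s'" by (rule norm_triangle_ineq4)
    also have "\<dots> \<le> D\<^sup>2 + 2 * (D\<^sup>2 * norm \<theta>)"
      using norm_sample_term_le[OF assms(4), of \<theta>] norm_sample_term_le[OF assms(5), of \<theta>]
      unfolding s_def s'_def by linarith
    also have "\<dots> \<le> 2 * D\<^sup>2 * (1 + norm \<theta>)"
      using zero_le_power2[of D] by (simp add: algebra_simps)
    finally show ?thesis .
  qed
  ultimately show ?thesis
    using assms(6) by (simp add: dist_norm divide_right_mono mult_left_mono)
qed

lemma W1_map_pmf_le:
  "W1 (map_pmf f p) (map_pmf g p) \<le> \<integral>\<^sup>+ x. ennreal (dist (f x) (g x)) \<partial>measure_pmf p"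
proof -
  let ?\<pi> = "map_pmf (\<lambda>x. (f x, g x)) p"
  have "W1 (map_pmf f p) (map_pmf g p) \<le> \<integral>\<^sup>+ z. ennreal (dist (fst z) (snd z)) \<partial>measure_pmf ?\<pi>"
    unfolding W1_def by (rule INF_lower) (simp add: map_pmf_comp)
  then show ?thesis by (simp add: nn_integral_map_pmf)
qed

lemma finite_batches: "finite (batches n b)"
  unfolding batches_def by (auto intro: finite_subset)

lemma card_batches: "card (batches n b) = n choose b"
  unfolding batches_def using n_subsets[of "{1..n}" b] by simp

lemma batches_nonempty: "b \<le> n \<Longrightarrow> batches n b \<noteq> {}"
  using card_batches[of n b] by (metis card.empty zero_less_binomial less_irrefl)

lemma prob_batches_member:
  assumes "j \<in> {1..n}" "b \<le> n"
  shows "measure_pmf.prob (pmf_of_set (batches n b)) {\<Omega>. j \<in> \<Omega>} = real b / real n"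
proof -
  let ?B = "batches n b"
  \<comment> \<open>The batches avoiding \<open>j\<close> are the \<open>b\<close>-subsets of an \<open>(n-1)\<close>-set, and
    \<open>(n - b) (n choose b) = n ((n - 1) choose b)\<close>.\<close>
  have "?B \<inter> {\<Omega>. j \<notin> \<Omega>} = {\<Omega>. \<Omega> \<subseteq> {1..n} - {j} \<and> card \<Omega> = b}"
    unfolding batches_def by auto
  then have "card (?B \<inter> {\<Omega>. j \<notin> \<Omega>}) = (n - 1) choose b"
    using n_subsets[of "{1..n} - {j}" b] assms(1) by simp
  then have "real (card (?B \<inter> {\<Omega>. j \<notin> \<Omega>})) * real n = real (n - b) * real (card ?B)"
    unfolding card_batches using binomial_absorb_comp[of n b] by (metis of_nat_mult mult.commute)
  moreover have "real (card ?B) > 0" and "real n > 0"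
    using assms card_batches[of n b] by auto
  ultimately have "measure_pmf.prob (pmf_of_set ?B) {\<Omega>. j \<notin> \<Omega>} = 1 - real b / real n"
    using assms(2) finite_batches batches_nonempty
    by (simp add: measure_pmf_of_set of_nat_diff field_simps)
  then show ?thesis
    using measure_pmf.prob_compl[of "{\<Omega>. j \<in> \<Omega>}" "pmf_of_set ?B"]
    by (simp add: Compl_eq_Diff_UNIV[symmetric] Collect_neg_eq[symmetric])
qed

lemma W1_sgd_kernel_le:
  assumes "\<eta> \<ge> 0" "j \<in> {1..n}" "b \<in> {1..n}"
    and "\<And>i. i \<in> {1..n} - {j} \<Longrightarrow> a i = a' i \<and> y i = y' i"
    and "norm (a j, y j) \<le> D" "norm (a' j, y' j) \<le> D"
  shows "W1 (sgd_kernel \<eta> n b a y \<theta>) (sgd_kernel \<eta> n b a' y' \<theta>)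
    \<le> ennreal (2 * \<eta> * D\<^sup>2 / real n * (1 + norm \<theta>))"
proof -
  let ?B = "pmf_of_set (batches n b)"
  define C where "C = \<eta> / real b * (2 * D\<^sup>2 * (1 + norm \<theta>))"
  have "W1 (sgd_kernel \<eta> n b a y \<theta>) (sgd_kernel \<eta> n b a' y' \<theta>)
    \<le> \<integral>\<^sup>+ \<Omega>. ennreal (dist (sgd_step \<eta> b a y \<Omega> \<theta>) (sgd_step \<eta> b a' y' \<Omega> \<theta>)) \<partial>?B"
    unfolding sgd_kernel_def by (rule W1_map_pmf_le)
  also have "\<dots> \<le> \<integral>\<^sup>+ \<Omega>. ennreal C * indicator {\<Omega>. j \<in> \<Omega>} \<Omega> \<partial>?B"
  proof (intro nn_integral_mono_AE AE_pmfI)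
    fix \<Omega> assume "\<Omega> \<in> set_pmf ?B"
    then have "\<Omega> \<in> batches n b"
      using assms(3) batches_nonempty finite_batches by simp
    then have \<Omega>: "\<Omega> \<subseteq> {1..n}" "finite \<Omega>"
      unfolding batches_def by (auto intro: finite_subset)
    show "ennreal (dist (sgd_step \<eta> b a y \<Omega> \<theta>) (sgd_step \<eta> b a' y' \<Omega> \<theta>))
      \<le> ennreal C * indicator {\<Omega>. j \<in> \<Omega>} \<Omega>"
    proof (cases "j \<in> \<Omega>")
      case True
      have "dist (sgd_step \<eta> b a y \<Omega> \<theta>) (sgd_step \<eta> b a' y' \<Omega> \<theta>) \<le> C"
        unfolding C_def using \<Omega> True assms by (intro dist_sgd_step_le) auto
      with True show ?thesis by (simp add: ennreal_leI)
    next
      case False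
      have "sgd_step \<eta> b a y \<Omega> \<theta> = sgd_step \<eta> b a' y' \<Omega> \<theta>"
        by (intro sgd_step_cong assms(4)) (use \<Omega>(1) False in auto)
      then show ?thesis by simp
    qed
  qed
  also have "\<dots> = ennreal C * emeasure ?B {\<Omega>. j \<in> \<Omega>}"
    by (rule nn_integral_cmult_indicator) simp
  also have "\<dots> = ennreal C * ennreal (real b / real n)"
    using assms(2,3) by (simp add: measure_pmf.emeasure_eq_measure prob_batches_member)
  also have "\<dots> = ennreal (C * (real b / real n))"
    by (rule ennreal_mult'[symmetric]) (simp add: C_def assms(1))
  also have "C * (real b / real n) = 2 * \<eta> * D\<^sup>2 / real n * (1 + norm \<theta>)"
    unfolding C_def using assms(3) by (simp add: field_simps)
  finally show ?thesis .
qed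

lemma obtain_only_exception:
  assumes "card {i \<in> A. P i} \<le> 1" "finite A" "A \<noteq> {}"
  obtains j where "j \<in> A" "\<And>i. i \<in> A - {j} \<Longrightarrow> \<not> P i"
proof (cases "\<exists>j\<in>A. P j")
  case True
  then obtain j where "j \<in> A" "P j" by blast
  moreover have "i = j" if "i \<in> A" "P i" for i
    using assms(1,2) \<open>j \<in> A\<close> \<open>P j\<close> that by (auto simp: card_le_Suc0_iff_eq)
  ultimately show ?thesis using that by blast
next
  case False
  with assms(3) show ?thesis using that by blast
qed

theorem lemma3p3:
  fixes \<eta> D :: real and n b :: nat
    and a ah :: "nat \<Rightarrow> real^'d" and y yh :: "nat \<Rightarrow> real"
  assumes "\<eta> > 0" and "n \<ge> 1" and "b \<in> {1..n}"
    and "card {i\<in>{1..n}. (a i, y i) \<noteq> (ah i, yh i)} \<le> 1"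
    and "\<forall>i\<in>{1..n}. norm (a i, y i) \<le> D \<and> norm (ah i, yh i) \<le> D"
  shows "(SUP \<theta>\<in>UNIV. W1 (sgd_kernel \<eta> n b a y \<theta>) (sgd_kernel \<eta> n b ah yh \<theta>)
                      / ennreal (1 + norm \<theta>))
         \<le> ennreal (2 * \<eta> * D^2 / real n)"
proof (rule SUP_least)
  fix \<theta> :: "real^'d"
  obtain j where j: "j \<in> {1..n}" "\<And>i. i \<in> {1..n} - {j} \<Longrightarrow> (a i, y i) = (ah i, yh i)"
  proof (rule obtain_only_exception[OF assms(4)])
    show "{1..n} \<noteq> {}" using assms(2) by simp
  qed (use that in blast)+
  have agree: "a i = ah i \<and> y i = yh i" if "i \<in> {1..n} - {j}" for i
    using j(2)[OF that] by simp
  have "W1 (sgd_kernel \<eta> n b a y \<theta>) (sgd_kernel \<eta> n b ah yh \<theta>)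
    \<le> ennreal (2 * \<eta> * D^2 / real n * (1 + norm \<theta>))"
    by (rule W1_sgd_kernel_le[OF _ j(1) assms(3) agree]) (use assms(1,5) j(1) in auto)
  also have "\<dots> = ennreal ((1 + norm \<theta>) * (2 * \<eta> * D^2 / real n))"
    by (simp add: ac_simps)
  also have "\<dots> = ennreal (1 + norm \<theta>) * ennreal (2 * \<eta> * D^2 / real n)"
    by (rule ennreal_mult') simp
  finally show "W1 (sgd_kernel \<eta> n b a y \<theta>) (sgd_kernel \<eta> n b ah yh \<theta>) / ennreal (1 + norm \<theta>)
    \<le> ennreal (2 * \<eta> * D^2 / real n)"
    by (intro divide_le_posI_ennreal) (auto simp: add_pos_nonneg)
qed

end
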